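(* Let $G$ be a (possibly infinite) cyclic graph with $\mathrm{wf}(G)=\frac pq$, where $p,q$ are relatively prime integers. If $v\in V$ is periodic, then its orbit has length $q$ and winding number $\gamma_q(v)=p$.
   Context: $S^1=\mathbb{R}/\mathbb{Z}$; $\preceq$/$\prec$ clockwise order; $\vec d(p,q)\in[0,1)$ clockwise distance. A directed graph has no loops and no pair of opposite edges; $N^+[G,v]=\{v\}\cup\{w:v\to w\}$. A directed graph with vertex set $V\subseteq S^1$ is cyclic if whenever $v\to u$ is an edge, $v\to w$ and $w\to u$ are edges for all $w\in V$ with $v\prec w\prec u\prec v$. For $0\le k<n/2$, $C_n^k$ is the cyclic graph on $\{0,\dots,n-1\}$ with edges $i\to i+s\bmod n$, $1\le s\le k$; a cyclic homomorphism is a directed-graph homomorphism weakly preserving cyclic order and non-constant when the domain has a directed cycle. For finite cyclic $G$, $\mathrm{wf}(G)=\sup\{k/n:\exists$ cyclic homomorphism $C_n^k\to G\}$; in general $\mathrm{wf}(G)=\sup\{\mathrm{wf}(G[W]):W\subseteq V$ finite$\}$. For $m\ge1$, $\gamma_m(v_0)=\sup\{\sum_{i=0}^{m-1}\vec d(v_i,v_{i+1}): v_{i+1}\in N^+[G,v_i]\}$. A vertex $v$ is periodic if there is $i\ge1$ such that $\gamma_i(v)$ is an integer and the supremum defining $\gamma_i(v)$ is achieved; the length of its orbit is the least such $i$, and its winding number is $\gamma_\ell(v)$ for that least $\ell$. *)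

theory Defs
  imports Complex_Main
begin

text \<open>Points of the circle S^1 = R/Z are represented by reals in [0,1).
  A directed graph is a pair (V, E) with V a set of such points and E a set of
  ordered pairs (edges v -> w).\<close>

definition cdist :: "real \<Rightarrow> real \<Rightarrow> real" where
  "cdist a b = frac (b - a)"

text \<open>Weak clockwise order a \<preceq> b \<preceq> c \<preceq> a.\<close>
definition cyc_weak :: "real \<Rightarrow> real \<Rightarrow> real \<Rightarrow> bool" where
  "cyc_weak a b c \<longleftrightarrow> cdist a b + cdist b c + cdist c a \<le> 1"

definition cyc_strict :: "real \<Rightarrow> real \<Rightarrow> real \<Rightarrow> bool" where
  "cyc_strict a b c \<longleftrightarrow> a \<noteq> b \<and> b \<noteq> c \<and> c \<noteq> a \<and> cyc_weak a b c"

definition circ_digraph :: "real set \<Rightarrow> (real \<times> real) set \<Rightarrow> bool" where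
  "circ_digraph V E \<longleftrightarrow> V \<subseteq> {0..<1} \<and> E \<subseteq> V \<times> V \<and>
     (\<forall>v. (v, v) \<notin> E) \<and> (\<forall>v w. (v, w) \<in> E \<longrightarrow> (w, v) \<notin> E)"

definition cyclic_graph :: "real set \<Rightarrow> (real \<times> real) set \<Rightarrow> bool" where
  "cyclic_graph V E \<longleftrightarrow> circ_digraph V E \<and>
     (\<forall>v u w. (v, u) \<in> E \<longrightarrow> w \<in> V \<longrightarrow> cyc_strict v w u \<longrightarrow> (v, w) \<in> E \<and> (w, u) \<in> E)"

text \<open>Cyclic homomorphism C_n^k -> (W, F); vertex i of C_n^k is the point i/n of the circle.\<close>
definition cyc_hom :: "nat \<Rightarrow> nat \<Rightarrow> real set \<Rightarrow> (real \<times> real) set \<Rightarrow> (nat \<Rightarrow> real) \<Rightarrow> bool" where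
  "cyc_hom n k W F f \<longleftrightarrow>
     (\<forall>i<n. f i \<in> W) \<and>
     (\<forall>i<n. \<forall>s. 1 \<le> s \<and> s \<le> k \<longrightarrow> (f i, f ((i + s) mod n)) \<in> F) \<and>
     (\<forall>i<n. \<forall>j<n. \<forall>l<n. cyc_weak (real i / real n) (real j / real n) (real l / real n)
          \<longrightarrow> cyc_weak (f i) (f j) (f l)) \<and>
     (1 \<le> k \<longrightarrow> (\<exists>i<n. \<exists>j<n. f i \<noteq> f j))"

definition wf_fin :: "real set \<Rightarrow> (real \<times> real) set \<Rightarrow> real" where
  "wf_fin W F = Sup {real k / real n | n k. 2 * k < n \<and> (\<exists>f. cyc_hom n k W F f)}"

definition winding_fraction :: "real set \<Rightarrow> (real \<times> real) set \<Rightarrow> real" where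
  "winding_fraction V E = Sup {wf_fin W (E \<inter> (W \<times> W)) | W. finite W \<and> W \<subseteq> V \<and> W \<noteq> {}}"

definition out_nbhd :: "(real \<times> real) set \<Rightarrow> real \<Rightarrow> real set" where
  "out_nbhd E v = {v} \<union> {w. (v, w) \<in> E}"

definition is_walk :: "(real \<times> real) set \<Rightarrow> nat \<Rightarrow> (nat \<Rightarrow> real) \<Rightarrow> bool" where
  "is_walk E m x \<longleftrightarrow> (\<forall>i<m. x (Suc i) \<in> out_nbhd E (x i))"

definition walk_len :: "nat \<Rightarrow> (nat \<Rightarrow> real) \<Rightarrow> real" where
  "walk_len m x = (\<Sum>i<m. cdist (x i) (x (Suc i)))"

definition gamma :: "(real \<times> real) set \<Rightarrow> nat \<Rightarrow> real \<Rightarrow> real" where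
  "gamma E m v = Sup {walk_len m x | x. x 0 = v \<and> is_walk E m x}"

definition gamma_attained :: "(real \<times> real) set \<Rightarrow> nat \<Rightarrow> real \<Rightarrow> bool" where
  "gamma_attained E m v \<longleftrightarrow> (\<exists>x. x 0 = v \<and> is_walk E m x \<and> walk_len m x = gamma E m v)"

definition periodic_at :: "(real \<times> real) set \<Rightarrow> real \<Rightarrow> nat \<Rightarrow> bool" where
  "periodic_at E v i \<longleftrightarrow> 1 \<le> i \<and> gamma E i v \<in> \<int> \<and> gamma_attained E i v"

definition periodic :: "(real \<times> real) set \<Rightarrow> real \<Rightarrow> bool" where
  "periodic E v \<longleftrightarrow> (\<exists>i. periodic_at E v i)"

definition orbit_length :: "(real \<times> real) set \<Rightarrow> real \<Rightarrow> nat" where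
  "orbit_length E v = (LEAST i. periodic_at E v i)"

definition winding_number :: "(real \<times> real) set \<Rightarrow> real \<Rightarrow> real" where
  "winding_number E v = gamma E (orbit_length E v) v"

end

theory Submission
  imports Defs
begin

text \<open>Let l be the orbit length of v and w = gamma_l(v).  By cyclicity a walk can be shadowed
  from any vertex ahead of it without falling behind; hence walks of length m l from v have
  length at most m w.  Restricted to the vertices of an optimal l-walk, the greedy choice of
  the clockwise-furthest out-neighbour is a monotone degree-one circle map with a point of
  rotation number w / l; minimality of l forces gcd w l = 1, and that orbit then carries a
  cyclic homomorphism from C_l^w, so wf(G) >= w / l.  Conversely, a homomorphism from C_n^k
  gives walks of n l steps winding l k times, which, shadowed from v, show l k <= n w.  Thus
  wf(G) = w / l in lowest terms, i.e. l = q and w = p.\<close>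

section \<open>Lifting circle points to the real line\<close>

lemma frac_eq_if_abs_less_1:
  "-1 < (x::real) \<Longrightarrow> x < 1 \<Longrightarrow> frac x = (if 0 \<le> x then x else x + 1)"
  using frac_eq[of x] frac_eq[of "x + 1"] by (auto simp: frac_1_eq)

lemma frac_add_frac: "frac (a + frac b) = frac (a + (b::real))"
proof -
  have "a + frac b = (a + b) + of_int (- \<lfloor>b\<rfloor>)" by (simp add: frac_def)
  then show ?thesis by (simp only: frac_add_of_int_right)
qed

lemma cdist_frac_frac: "cdist (frac a) (frac b) = frac (b - a)"
proof -
  have "frac b - frac a = (b - a) + of_int (\<lfloor>a\<rfloor> - \<lfloor>b\<rfloor>)" by (simp add: frac_def)
  then show ?thesis unfolding cdist_def by (simp only: frac_add_of_int_right)
qed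

lemma cdist_nonneg: "cdist a b \<ge> 0" and cdist_less_1: "cdist a b < 1"
  unfolding cdist_def by (auto simp: frac_lt_1)

lemma cdist_frac_frac_if_le:
  "a \<le> b \<Longrightarrow> b < a + 1 \<Longrightarrow> cdist (frac a) (frac b) = b - a"
  by (simp add: cdist_frac_frac frac_eq)

lemma cdist_eq_if_unit:
  "a \<in> {0..<1} \<Longrightarrow> b \<in> {0..<1} \<Longrightarrow> cdist a b = (if a \<le> b then b - a else b - a + 1)"
  unfolding cdist_def by (subst frac_eq_if_abs_less_1) auto

lemma cdist_eq_0_iff: "a \<in> {0..<1} \<Longrightarrow> b \<in> {0..<1} \<Longrightarrow> cdist a b = 0 \<longleftrightarrow> a = b"
  by (auto simp: cdist_eq_if_unit)

lemma cdist_add_cdist_swap: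
  "a \<in> {0..<1} \<Longrightarrow> b \<in> {0..<1} \<Longrightarrow> a \<noteq> b \<Longrightarrow> cdist a b + cdist b a = 1"
  by (simp add: cdist_eq_if_unit)

lemma frac_inj_on_window:
  assumes "(\<alpha>::real) \<le> a" "a < \<alpha> + 1" "\<alpha> \<le> b" "b < \<alpha> + 1" "frac a = frac b"
  shows "a = b"
  using cdist_frac_frac[of a b] frac_eq_if_abs_less_1[of "b - a"] assms
  by (auto simp: cdist_def split: if_splits)

lemma cyc_weak_frac_iff:
  assumes "(\<alpha>::real) \<le> a" "a < \<alpha> + 1" "\<alpha> \<le> b" "b < \<alpha> + 1" "\<alpha> \<le> c" "c < \<alpha> + 1"
  shows "cyc_weak (frac a) (frac b) (frac c) \<longleftrightarrow>
    (a \<le> b \<and> b \<le> c) \<or> (b \<le> c \<and> c \<le> a) \<or> (c \<le> a \<and> a \<le> b)"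
proof -
  have lift: "cdist (frac s) (frac t) = (if 0 \<le> t - s then t - s else t - s + 1)"
    if "\<alpha> \<le> s" "s < \<alpha> + 1" "\<alpha> \<le> t" "t < \<alpha> + 1" for s t
    unfolding cdist_frac_frac using that by (intro frac_eq_if_abs_less_1) auto
  show ?thesis
    unfolding cyc_weak_def lift[OF assms(1-4)] lift[OF assms(3-6)] lift[OF assms(5,6,1,2)]
    by (auto split: if_splits)
qed

lemma cyc_strict_frac:
  assumes "(s::real) < t" "t < s'" "s' < s + 1"
  shows "cyc_strict (frac s) (frac t) (frac s')"
proof -
  have "cyc_weak (frac s) (frac t) (frac s')"
    using assms by (subst cyc_weak_frac_iff[of s]) auto
  moreover have "frac s \<noteq> frac t" "frac t \<noteq> frac s'" "frac s' \<noteq> frac s"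
    using frac_inj_on_window[of s s t] frac_inj_on_window[of s t s'] frac_inj_on_window[of s s' s] assms
    by auto
  ultimately show ?thesis unfolding cyc_strict_def by auto
qed

lemma cyc_weak_both_orders:
  assumes "a \<in> {0..<1}" "b \<in> {0..<1}" "d \<in> {0..<1}" "a \<noteq> b"
    and "cyc_weak a b d" "cyc_weak b a d"
  shows "d = a \<or> d = b"
proof (rule ccontr)
  assume "\<not> (d = a \<or> d = b)"
  then have "cdist a b + cdist b a = 1" "cdist b d + cdist d b = 1" "cdist d a + cdist a d = 1"
    using assms cdist_add_cdist_swap by auto
  then show False using assms(5,6) unfolding cyc_weak_def by linarith
qed

section \<open>Cyclic graphs and walks\<close>

lemma cyclic_graph_edge_split:
  assumes "cyclic_graph V E" "(a, c) \<in> E" "b \<in> V" "cyc_strict a b c"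
  shows "(a, b) \<in> E \<and> (b, c) \<in> E"
  using assms unfolding cyclic_graph_def by blast

lemma cyclic_graph_circ_digraph: "cyclic_graph V E \<Longrightarrow> circ_digraph V E"
  unfolding cyclic_graph_def by blast

lemma cyclic_graph_vertex_unit: "cyclic_graph V E \<Longrightarrow> v \<in> V \<Longrightarrow> v \<in> {0..<1}"
  and cyclic_graph_edge_in_V: "cyclic_graph V E \<Longrightarrow> (a, b) \<in> E \<Longrightarrow> a \<in> V \<and> b \<in> V"
  and cyclic_graph_no_loop: "cyclic_graph V E \<Longrightarrow> (a, a) \<notin> E"
  and cyclic_graph_no_opposite: "cyclic_graph V E \<Longrightarrow> (a, b) \<in> E \<Longrightarrow> (b, a) \<notin> E"
  using cyclic_graph_circ_digraph unfolding circ_digraph_def by blast+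

lemma out_nbhd_iff: "w \<in> out_nbhd E u \<longleftrightarrow> w = u \<or> (u, w) \<in> E"
  unfolding out_nbhd_def by auto

lemma out_nbhd_in_V: "cyclic_graph V E \<Longrightarrow> u \<in> V \<Longrightarrow> w \<in> out_nbhd E u \<Longrightarrow> w \<in> V"
  unfolding out_nbhd_iff using cyclic_graph_edge_in_V by blast

lemma walk_len_0 [simp]: "walk_len 0 x = 0"
  unfolding walk_len_def by simp

lemma walk_len_Suc: "walk_len (Suc m) x = walk_len m x + cdist (x m) (x (Suc m))"
  unfolding walk_len_def by simp

lemma is_walk_0 [simp]: "is_walk E 0 x"
  unfolding is_walk_def by simp

lemma is_walk_Suc: "is_walk E (Suc m) x \<longleftrightarrow> is_walk E m x \<and> x (Suc m) \<in> out_nbhd E (x m)"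
  unfolding is_walk_def by (auto simp: less_Suc_eq)

lemma is_walk_const: "is_walk E m (\<lambda>_. v)"
  unfolding is_walk_def by (simp add: out_nbhd_iff)

lemma walk_len_cong: "(\<And>i. i \<le> m \<Longrightarrow> x i = y i) \<Longrightarrow> walk_len m x = walk_len m y"
  unfolding walk_len_def by (intro sum.cong) auto

lemma is_walk_cong: "(\<And>i. i \<le> m \<Longrightarrow> x i = y i) \<Longrightarrow> is_walk E m x = is_walk E m y"
  unfolding is_walk_def by auto

lemma walk_len_nonneg: "walk_len m x \<ge> 0"
  unfolding walk_len_def by (intro sum_nonneg) (simp add: cdist_nonneg)

lemma walk_len_le: "walk_len m x \<le> real m"
proof -
  have "walk_len m x \<le> (\<Sum>i<m. 1)"
    unfolding walk_len_def by (intro sum_mono) (simp add: cdist_less_1 less_imp_le)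
  then show ?thesis by simp
qed

lemma is_walk_prefix: "is_walk E m x \<Longrightarrow> k \<le> m \<Longrightarrow> is_walk E k x"
  unfolding is_walk_def by auto

lemma walk_in_V:
  assumes "cyclic_graph V E" "is_walk E m x" "x 0 \<in> V" "i \<le> m"
  shows "x i \<in> V"
  using assms(4)
proof (induction i)
  case (Suc i)
  then show ?case
    using assms(2) out_nbhd_in_V[OF assms(1)] unfolding is_walk_def by simp
qed (use assms in simp)

lemma walk_in_unit:
  "cyclic_graph V E \<Longrightarrow> is_walk E m x \<Longrightarrow> x 0 \<in> V \<Longrightarrow> i \<le> m \<Longrightarrow> x i \<in> {0..<1}"
  using walk_in_V cyclic_graph_vertex_unit by blast

lemma frac_add_walk_len:
  assumes "\<And>i. i \<le> m \<Longrightarrow> x i \<in> {0..<1}" "frac S = x 0"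
  shows "frac (S + walk_len m x) = x m"
  using assms(1)
proof (induction m)
  case (Suc m)
  have "frac (S + walk_len (Suc m) x) = frac ((S + walk_len m x) + frac (x (Suc m) - x m))"
    by (simp add: walk_len_Suc cdist_def add.assoc)
  also have "\<dots> = frac ((S + walk_len m x) + (x (Suc m) - x m))"
    by (rule frac_add_frac)
  also have "\<dots> = frac (frac (S + walk_len m x) + (x (Suc m) - x m))"
    using frac_add_frac[of "x (Suc m) - x m" "S + walk_len m x"] by (simp add: add.commute)
  also have "\<dots> = x (Suc m)"
    using Suc by simp
  finally show ?case .
qed (use assms(2) in simp)

lemma walk_len_add: "walk_len (a + b) y = walk_len a y + walk_len b (\<lambda>i. y (i + a))"
  by (induction b) (simp_all add: walk_len_Suc add.commute)

lemma walk_len_mono: "a \<le> b \<Longrightarrow> walk_len a y \<le> walk_len b y"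
  using walk_len_add[of a "b - a" y] walk_len_nonneg[of "b - a"] by simp

lemma is_walk_shift: "is_walk E (a + b) y \<Longrightarrow> is_walk E b (\<lambda>i. y (i + a))"
  unfolding is_walk_def by (auto simp: add.commute)

definition walk_append :: "nat \<Rightarrow> (nat \<Rightarrow> real) \<Rightarrow> (nat \<Rightarrow> real) \<Rightarrow> nat \<Rightarrow> real" where
  "walk_append a y u i = (if i \<le> a then y i else u (i - a))"

lemma is_walk_append:
  assumes "is_walk E a y" "is_walk E b u" "u 0 = y a"
  shows "is_walk E (a + b) (walk_append a y u)"
  unfolding is_walk_def
proof (intro allI impI)
  fix i assume "i < a + b"
  then consider "i < a" | "a \<le> i" "i - a < b" by linarith
  then show "walk_append a y u (Suc i) \<in> out_nbhd E (walk_append a y u i)"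
  proof cases
    case 1
    then show ?thesis using assms(1) by (simp add: walk_append_def is_walk_def)
  next
    case 2
    then have "u (Suc (i - a)) \<in> out_nbhd E (u (i - a))"
      using assms(2) by (simp add: is_walk_def)
    then show ?thesis using 2 assms(3) by (auto simp: walk_append_def Suc_diff_le)
  qed
qed

lemma walk_len_append:
  assumes "u 0 = y a"
  shows "walk_len (a + b) (walk_append a y u) = walk_len a y + walk_len b u"
proof -
  have "walk_len a (walk_append a y u) = walk_len a y"
    by (rule walk_len_cong) (simp add: walk_append_def)
  moreover have "walk_len b (\<lambda>i. walk_append a y u (i + a)) = walk_len b u"
    by (rule walk_len_cong) (use assms in \<open>auto simp: walk_append_def\<close>)
  ultimately show ?thesis by (simp add: walk_len_add)
qed

lemma walk_len_le_gamma: "x 0 = v \<Longrightarrow> is_walk E m x \<Longrightarrow> walk_len m x \<le> gamma E m v"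
  unfolding gamma_def
  by (rule cSup_upper, blast, rule bdd_aboveI[of _ "real m"]) (auto simp: walk_len_le)

lemma gamma_le:
  "(\<And>x. x 0 = v \<Longrightarrow> is_walk E m x \<Longrightarrow> walk_len m x \<le> b) \<Longrightarrow> gamma E m v \<le> b"
  unfolding gamma_def
  by (rule cSup_least) (use is_walk_const[of E m v] in auto)

section \<open>Comparing walks through their lifts\<close>

text \<open>The key consequence of cyclicity: a walk can be shadowed from any vertex lying
  ahead of it (in the lift) without falling behind.\<close>

lemma step_domination:
  assumes G: "cyclic_graph V E" and a: "a \<in> V" and b: "b \<in> V" and c: "c \<in> out_nbhd E a"
    and fs: "frac s = a" and ft: "frac t = b" and st: "s \<le> t"
  shows "\<exists>c' \<in> out_nbhd E b. s + cdist a c \<le> t + cdist b c'"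
proof (cases "s + cdist a c \<le> t")
  case True
  then show ?thesis by (intro bexI[of _ b]) (auto simp: cdist_def out_nbhd_iff)
next
  case False
  define s' where "s' = s + cdist a c"
  have "c \<in> {0..<1}" using out_nbhd_in_V[OF G a c] cyclic_graph_vertex_unit[OF G] by blast
  moreover have "frac s' = frac (frac s + (c - a))"
    unfolding s'_def cdist_def by (metis add.commute frac_add_frac)
  ultimately have fs': "frac s' = c" using fs by simp
  have lt: "t < s'" "s' < s + 1" using False cdist_less_1[of a c] unfolding s'_def by auto
  have "c \<in> out_nbhd E b"
  proof (cases "s = t")
    case True then show ?thesis using c fs ft by simp
  next
    case False
    then have cs: "cyc_strict a b c" using cyc_strict_frac[of s t s'] st lt fs ft fs' by simp
    then have "(a, c) \<in> E" using c unfolding cyc_strict_def out_nbhd_iff by auto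
    then show ?thesis using cyclic_graph_edge_split[OF G _ b cs] by (simp add: out_nbhd_iff)
  qed
  moreover have "cdist b c = s' - t"
    using cdist_frac_frac_if_le[of t s'] lt st fs' ft by simp
  ultimately show ?thesis unfolding s'_def by (intro bexI[of _ c]) auto
qed

lemma walk_domination:
  assumes G: "cyclic_graph V E" and x: "is_walk E m x" "x 0 \<in> V"
    and fs: "frac s = x 0" and ft: "frac t \<in> V" and st: "s \<le> t"
  shows "\<exists>y. y 0 = frac t \<and> is_walk E m y \<and> s + walk_len m x \<le> t + walk_len m y"
  using x(1)
proof (induction m)
  case 0
  show ?case using st by (intro exI[of _ "\<lambda>_. frac t"]) simp
next
  case (Suc m)
  then obtain y where y: "y 0 = frac t" "is_walk E m y" "s + walk_len m x \<le> t + walk_len m y"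
    by (auto simp: is_walk_Suc)
  have x_unit: "\<And>i. i \<le> m \<Longrightarrow> x i \<in> {0..<1}"
    using walk_in_unit[OF G Suc.prems x(2)] by auto
  have y_unit: "\<And>i. i \<le> m \<Longrightarrow> y i \<in> {0..<1}"
    using walk_in_unit[OF G y(2)] y(1) ft by auto
  have "x m \<in> V" "y m \<in> V" using walk_in_V[OF G Suc.prems x(2)] walk_in_V[OF G y(2)] y(1) ft by auto
  moreover have "x (Suc m) \<in> out_nbhd E (x m)" using Suc.prems by (simp add: is_walk_Suc)
  ultimately obtain c where c: "c \<in> out_nbhd E (y m)"
    "s + walk_len m x + cdist (x m) (x (Suc m)) \<le> t + walk_len m y + cdist (y m) c"
    using step_domination[OF G, of "x m" "y m" "x (Suc m)" "s + walk_len m x" "t + walk_len m y"]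
      frac_add_walk_len[of m x s, OF x_unit fs] frac_add_walk_len[of m y t, OF y_unit] y by auto
  have "walk_len m (y(Suc m := c)) = walk_len m y" by (rule walk_len_cong) simp
  moreover have "is_walk E m (y(Suc m := c)) = is_walk E m y" by (rule is_walk_cong) simp
  ultimately show ?case
    using y c by (intro exI[of _ "y(Suc m := c)"]) (simp add: is_walk_Suc walk_len_Suc fun_upd_same fun_upd_other del: fun_upd_apply)
qed

lemma walk_amplify:
  assumes G: "cyclic_graph V E" and v: "v \<in> V" and z: "z 0 = v" "is_walk E a z"
    and long: "walk_len a z > of_int b" and j: "j \<ge> 1"
  shows "\<exists>y. y 0 = v \<and> is_walk E (j * a) y \<and> walk_len (j * a) y > of_int (int j * b)"
  using j
proof (induction j rule: dec_induct)
  case base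
  then show ?case using z long by auto
next
  case (step j)
  then obtain y where y: "y 0 = v" "is_walk E (j * a) y" "walk_len (j * a) y > of_int (int j * b)"
    by blast
  have fv: "frac v = v" using cyclic_graph_vertex_unit[OF G v] by simp
  define t where "t = v + walk_len (j * a) y"
  have ft: "frac t = y (j * a)"
    unfolding t_def using walk_in_unit[OF G y(2)] y(1) v fv by (intro frac_add_walk_len) auto
  have "frac (v + of_int (int j * b)) = z 0" using fv z(1) by (simp only: frac_add_of_int_right)
  moreover have "frac t \<in> V" using ft walk_in_V[OF G y(2)] y(1) v by simp
  moreover have "v + of_int (int j * b) \<le> t" using y(3) unfolding t_def by simp
  ultimately obtain u where u: "u 0 = frac t" "is_walk E a u"
    "v + of_int (int j * b) + walk_len a z \<le> t + walk_len a u"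
    using walk_domination[OF G z(2)] z(1) v by blast
  have "walk_append (j * a) y u 0 = v" using y(1) by (simp add: walk_append_def)
  then show ?case
    using is_walk_append[OF y(2) u(2)] walk_len_append[of u y "j * a" a] u(1,3) ft long
    unfolding t_def by (intro exI[of _ "walk_append (j * a) y u"]) (simp add: algebra_simps)
qed

lemma walk_len_mult_le:
  assumes G: "cyclic_graph V E" and v: "v \<in> V"
    and bound: "\<And>y. y 0 = v \<Longrightarrow> is_walk E l y \<Longrightarrow> walk_len l y \<le> of_int w"
    and y: "y 0 = v" "is_walk E (m * l) y"
  shows "walk_len (m * l) y \<le> of_int (int m * w)"
  using y
proof (induction m arbitrary: y)
  case (Suc m)
  have fv: "frac v = v" using cyclic_graph_vertex_unit[OF G v] by simp
  have yw: "is_walk E (m * l + l) y" using Suc.prems(2) by (simp add: add.commute)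
  have ih: "walk_len (m * l) y \<le> of_int (int m * w)"
    using Suc.IH[OF Suc.prems(1) is_walk_prefix[OF yw]] by simp
  define z where "z i = y (i + m * l)" for i
  have fz: "frac (v + walk_len (m * l) y) = z 0"
    unfolding z_def using walk_in_unit[OF G yw] Suc.prems(1) v fv by (simp, intro frac_add_walk_len) auto
  have fw: "frac (v + of_int (int m * w)) = v" using fv by (simp only: frac_add_of_int_right)
  have "z 0 \<in> V" unfolding z_def using walk_in_V[OF G yw] Suc.prems(1) v by simp
  then obtain u where u: "u 0 = v" "is_walk E l u"
    "v + walk_len (m * l) y + walk_len l z \<le> v + of_int (int m * w) + walk_len l u"
    using walk_domination[OF G is_walk_shift[OF yw, folded z_def] _ fz, of "v + of_int (int m * w)"]
      fw v ih by auto
  have "walk_len (m * l + l) y = walk_len (m * l) y + walk_len l z"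
    unfolding z_def by (rule walk_len_add)
  then show ?case
    using u(3) bound[OF u(1,2)] by (simp add: add.commute algebra_simps)
qed simp

section \<open>Monotone degree-one lifts\<close>

text \<open>H is a monotone degree-one lift of a circle map, but only on the set L of lifts of
  a set of circle points; outside L it is unconstrained.\<close>

locale circle_lift =
  fixes H :: "real \<Rightarrow> real" and L :: "real set"
  assumes closed: "t \<in> L \<Longrightarrow> H t \<in> L"
    and shift_closed: "t \<in> L \<Longrightarrow> t + of_int z \<in> L"
    and shift: "t \<in> L \<Longrightarrow> H (t + of_int z) = H t + of_int z"
    and mono: "s \<in> L \<Longrightarrow> t \<in> L \<Longrightarrow> s \<le> t \<Longrightarrow> H s \<le> H t"
begin

lemma funpow_closed: "t \<in> L \<Longrightarrow> (H ^^ n) t \<in> L"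
  by (induction n) (auto simp: closed)

lemma funpow_shift: "t \<in> L \<Longrightarrow> (H ^^ n) (t + of_int z) = (H ^^ n) t + of_int z"
  by (induction n) (auto simp: shift funpow_closed)

lemma funpow_mono: "s \<in> L \<Longrightarrow> t \<in> L \<Longrightarrow> s \<le> t \<Longrightarrow> (H ^^ n) s \<le> (H ^^ n) t"
  by (induction n) (auto simp: mono funpow_closed)

lemma funpow_funpow: "(H ^^ a) ((H ^^ b) t) = (H ^^ (a + b)) t"
  by (simp add: funpow_add)

lemma funpow_mult_shift:
  assumes "u \<in> L" "(H ^^ l) u = u + of_int w"
  shows "(H ^^ (l * r)) u = u + of_int (int r * w)"
proof (induction r)
  case (Suc r)
  have "(H ^^ (l * Suc r)) u = (H ^^ l) ((H ^^ (l * r)) u)" by (simp add: funpow_funpow)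
  then show ?case using Suc funpow_shift[OF assms(1), of l "int r * w"] assms(2)
    by (simp add: algebra_simps)
qed simp

lemma funpow_mult_le_shift:
  assumes "u \<in> L" "(H ^^ k) u \<le> u + of_int c"
  shows "(H ^^ (k * j)) u \<le> u + of_int (int j * c)"
proof (induction j)
  case (Suc j)
  have "(H ^^ (k * Suc j)) u = (H ^^ k) ((H ^^ (k * j)) u)" by (simp add: funpow_funpow)
  also have "\<dots> \<le> (H ^^ k) (u + of_int (int j * c))"
    using funpow_mono[OF funpow_closed shift_closed Suc] assms(1) by blast
  also have "\<dots> = (H ^^ k) u + of_int (int j * c)" by (rule funpow_shift[OF assms(1)])
  finally show ?case using assms(2) by (simp add: algebra_simps)
qed simp

lemma funpow_mult_ge_shift:
  assumes "u \<in> L" "(H ^^ k) u \<ge> u + of_int c"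
  shows "(H ^^ (k * j)) u \<ge> u + of_int (int j * c)"
proof (induction j)
  case (Suc j)
  have "(H ^^ (k * Suc j)) u = (H ^^ k) ((H ^^ (k * j)) u)" by (simp add: funpow_funpow)
  also have "\<dots> \<ge> (H ^^ k) (u + of_int (int j * c))"
    using funpow_mono[OF shift_closed funpow_closed Suc] assms(1) by blast
  also have "(H ^^ k) (u + of_int (int j * c)) = (H ^^ k) u + of_int (int j * c)"
    by (rule funpow_shift[OF assms(1)])
  finally show ?case using assms(2) by (simp add: algebra_simps)
qed simp

text \<open>A point with H^l u = u + w has rotation number w / l: its iterates compare with integer
  translates exactly as under the rotation by w / l.  For the strict direction, iterate
  l - 1 times and take one more step from the strict inequality.\<close>

lemma rotation_le_iff:
  assumes u: "u \<in> L" and l: "l \<ge> 1" and per: "(H ^^ l) u = u + of_int w"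
  shows "(H ^^ k) u \<le> u + of_int c \<longleftrightarrow> int k * w \<le> c * int l"
proof
  assume "(H ^^ k) u \<le> u + of_int c"
  from funpow_mult_le_shift[OF u this, of l] funpow_mult_shift[OF u per, of k]
  have "real_of_int (int k * w) \<le> real_of_int (c * int l)" by (simp add: mult.commute)
  then show "int k * w \<le> c * int l" by (simp only: of_int_le_iff)
next
  assume le: "int k * w \<le> c * int l"
  show "(H ^^ k) u \<le> u + of_int c"
  proof (rule ccontr)
    assume "\<not> ?thesis"
    then have gt: "(H ^^ k) u > u + of_int c" by simp
    have "(H ^^ (k * (l - 1))) u \<ge> u + of_int (int (l - 1) * c)"
      using funpow_mult_ge_shift[OF u] gt by simp
    then have "(H ^^ k) ((H ^^ (k * (l - 1))) u) \<ge> (H ^^ k) u + of_int (int (l - 1) * c)"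
      using funpow_mono[OF shift_closed[OF u] funpow_closed[OF u]] funpow_shift[OF u] by metis
    moreover have "k + k * (l - 1) = l * k" using l by (simp add: algebra_simps)
    ultimately have "real_of_int (int k * w) > real_of_int (c + int (l - 1) * c)"
      using gt funpow_mult_shift[OF u per, of k] by (simp add: funpow_funpow)
    then have "int k * w > c + int (l - 1) * c" by (simp only: of_int_less_iff)
    moreover have "c + int (l - 1) * c = c * int l" using l by (simp add: algebra_simps of_nat_diff)
    ultimately show False using le by simp
  qed
qed

lemma rotation_ge_iff:
  assumes u: "u \<in> L" and l: "l \<ge> 1" and per: "(H ^^ l) u = u + of_int w"
  shows "(H ^^ k) u \<ge> u + of_int c \<longleftrightarrow> int k * w \<ge> c * int l"
proof
  assume "(H ^^ k) u \<ge> u + of_int c"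
  from funpow_mult_ge_shift[OF u this, of l] funpow_mult_shift[OF u per, of k]
  have "real_of_int (int k * w) \<ge> real_of_int (c * int l)" by (simp add: mult.commute)
  then show "int k * w \<ge> c * int l" by (simp only: of_int_le_iff)
next
  assume ge: "int k * w \<ge> c * int l"
  show "(H ^^ k) u \<ge> u + of_int c"
  proof (rule ccontr)
    assume "\<not> ?thesis"
    then have lt: "(H ^^ k) u < u + of_int c" by simp
    have "(H ^^ (k * (l - 1))) u \<le> u + of_int (int (l - 1) * c)"
      using funpow_mult_le_shift[OF u] lt by simp
    then have "(H ^^ k) ((H ^^ (k * (l - 1))) u) \<le> (H ^^ k) u + of_int (int (l - 1) * c)"
      using funpow_mono[OF funpow_closed[OF u] shift_closed[OF u]] funpow_shift[OF u] by metis
    moreover have "k + k * (l - 1) = l * k" using l by (simp add: algebra_simps)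
    ultimately have "real_of_int (int k * w) < real_of_int (c + int (l - 1) * c)"
      using lt funpow_mult_shift[OF u per, of k] by (simp add: funpow_funpow)
    then have "int k * w < c + int (l - 1) * c" by (simp only: of_int_less_iff)
    moreover have "c + int (l - 1) * c = c * int l" using l by (simp add: algebra_simps of_nat_diff)
    ultimately show False using ge by simp
  qed
qed

lemma funpow_periodic_orbit:
  assumes "v \<in> L" "(H ^^ l) v = v + of_int w"
  shows "(H ^^ l) ((H ^^ i) v) = (H ^^ i) v + of_int w"
proof -
  have "(H ^^ l) ((H ^^ i) v) = (H ^^ i) ((H ^^ l) v)" by (simp add: funpow_funpow add.commute)
  then show ?thesis using assms funpow_shift[OF assms(1), of i w] by simp
qed

lemma orbit_le_iff:
  assumes v: "v \<in> L" and l: "l \<ge> 1" and per: "(H ^^ l) v = v + of_int w"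
  shows "(H ^^ i) v + of_int a \<le> (H ^^ j) v + of_int b \<longleftrightarrow> int i * w + a * int l \<le> int j * w + b * int l"
proof (cases "i \<le> j")
  case True
  define u where "u = (H ^^ i) v"
  have u: "u \<in> L" "(H ^^ l) u = u + of_int w"
    unfolding u_def using funpow_closed[OF v] funpow_periodic_orbit[OF v per] by auto
  have "(H ^^ j) v = (H ^^ (j - i)) u" unfolding u_def using True by (simp add: funpow_funpow)
  then have "(H ^^ i) v + of_int a \<le> (H ^^ j) v + of_int b \<longleftrightarrow> (H ^^ (j - i)) u \<ge> u + of_int (a - b)"
    unfolding u_def by (simp add: algebra_simps)
  also have "\<dots> \<longleftrightarrow> int (j - i) * w \<ge> (a - b) * int l" by (rule rotation_ge_iff[OF u(1) l u(2)])
  finally show ?thesis using True by (simp add: of_nat_diff algebra_simps)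
next
  case False
  define u where "u = (H ^^ j) v"
  have u: "u \<in> L" "(H ^^ l) u = u + of_int w"
    unfolding u_def using funpow_closed[OF v] funpow_periodic_orbit[OF v per] by auto
  have "(H ^^ i) v = (H ^^ (i - j)) u" unfolding u_def using False by (simp add: funpow_funpow)
  then have "(H ^^ i) v + of_int a \<le> (H ^^ j) v + of_int b \<longleftrightarrow> (H ^^ (i - j)) u \<le> u + of_int (b - a)"
    unfolding u_def by (simp add: algebra_simps)
  also have "\<dots> \<longleftrightarrow> int (i - j) * w \<le> (b - a) * int l" by (rule rotation_le_iff[OF u(1) l u(2)])
  finally show ?thesis using False by (simp add: of_nat_diff algebra_simps)
qed

end

lemma coprime_nat_combination:
  fixes w :: int and l :: nat
  assumes "coprime w (int l)" "l \<ge> 1"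
  shows "\<exists>i::nat. \<exists>c::int. int i * w - c * int l = n"
proof -
  obtain s t where st: "s * w + t * int l = 1"
    using bezout_int[of w "int l"] assms(1) by (auto simp: coprime_iff_gcd_eq_1)
  define i where "i = nat ((n * s) mod int l)"
  define c where "c = - (n * t) - ((n * s) div int l) * w"
  have "int i = (n * s) mod int l" unfolding i_def using assms(2) by simp
  moreover have "w * ((n * s) mod int l) + w * (int l * ((n * s) div int l)) = w * (n * s)"
    using div_mult_mod_eq[of "n * s" "int l"] by (metis add.commute distrib_left mult.commute)
  ultimately have "int i * w - c * int l = w * (n * s) + n * t * int l"
    unfolding c_def by (simp add: algebra_simps)
  also have "\<dots> = n * (s * w + t * int l)" by (simp add: algebra_simps)
  finally show ?thesis using st by auto
qed

text \<open>When w and l are coprime, the lifted orbit of v, together with its integer translates,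
  is order-isomorphic to the integers: the point of rank n is H^i v - c for any
  i, c with i w - c l = n.\<close>

locale rotation_orbit = circle_lift +
  fixes v :: real and l :: nat and w :: int
  assumes v_in_L: "v \<in> L" and l_pos: "l \<ge> 1" and periodic: "(H ^^ l) v = v + of_int w"
    and coprime: "coprime w (int l)"
begin

definition orbit_point :: "int \<Rightarrow> real" where
  "orbit_point n = (SOME t. \<exists>i c. int i * w - c * int l = n \<and> t = (H ^^ i) v - of_int c)"

lemma orbit_point_eq:
  assumes rep: "int i * w - c * int l = n"
  shows "orbit_point n = (H ^^ i) v - of_int c"
proof -
  have "\<exists>i' c'. int i' * w - c' * int l = n \<and> orbit_point n = (H ^^ i') v - of_int c'"
    unfolding orbit_point_def by (rule someI_ex) (use rep in blast)
  then obtain i' c' where "int i' * w - c' * int l = n" "orbit_point n = (H ^^ i') v - of_int c'"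
    by blast
  then show ?thesis
    using orbit_le_iff[OF v_in_L l_pos periodic, of i' "- c'" i "- c"]
      orbit_le_iff[OF v_in_L l_pos periodic, of i "- c" i' "- c'"] rep by simp
qed

lemma orbit_point_rep: "\<exists>i c. int i * w - c * int l = n"
  using coprime_nat_combination[OF coprime l_pos] .

lemma orbit_point_le_iff: "orbit_point n \<le> orbit_point n' \<longleftrightarrow> n \<le> n'"
proof -
  obtain i c i' c' where rep: "int i * w - c * int l = n" and rep': "int i' * w - c' * int l = n'"
    using orbit_point_rep by meson
  show ?thesis
    using orbit_point_eq[OF rep] orbit_point_eq[OF rep'] rep rep'
      orbit_le_iff[OF v_in_L l_pos periodic, of i "- c" i' "- c'"] by simp
qed

lemma orbit_point_less_iff: "orbit_point n < orbit_point n' \<longleftrightarrow> n < n'"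
  using orbit_point_le_iff[of n' n] by auto

lemma orbit_point_shift: "orbit_point (n + z * int l) = orbit_point n + of_int z"
proof -
  obtain i c where rep: "int i * w - c * int l = n" using orbit_point_rep by blast
  have rep': "int i * w - (c - z) * int l = n + z * int l" using rep by (simp add: algebra_simps)
  show ?thesis using orbit_point_eq[OF rep] orbit_point_eq[OF rep'] by simp
qed

lemma orbit_point_add_l: "orbit_point (n + int l) = orbit_point n + 1"
  using orbit_point_shift[of n 1] by simp

lemma orbit_point_in_L: "orbit_point n \<in> L"
proof -
  obtain i c where rep: "int i * w - c * int l = n" using orbit_point_rep by blast
  show ?thesis using orbit_point_eq[OF rep] shift_closed[OF funpow_closed[OF v_in_L], of i "- c"] by simp
qed

lemma H_orbit_point: "H (orbit_point n) = orbit_point (n + w)"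
proof -
  obtain i c where rep: "int i * w - c * int l = n" using orbit_point_rep by blast
  have rep': "int (Suc i) * w - c * int l = n + w" using rep by (simp add: algebra_simps)
  show ?thesis
    using orbit_point_eq[OF rep] shift[OF funpow_closed[OF v_in_L], of i "- c"] orbit_point_eq[OF rep']
    by simp
qed

lemma orbit_point_0: "orbit_point 0 = v"
  using orbit_point_eq[of 0 0 0] by simp

end

locale orbit_in_graph = rotation_orbit +
  fixes V :: "real set" and E :: "(real \<times> real) set" and Ob :: "real set"
  assumes graph: "cyclic_graph V E" and Ob_subset: "Ob \<subseteq> V" and L_eq: "L = {t. frac t \<in> Ob}"
    and H_ge: "t \<in> L \<Longrightarrow> t \<le> H t" and H_less: "t \<in> L \<Longrightarrow> H t < t + 1"
    and H_step: "t \<in> L \<Longrightarrow> frac (H t) \<in> out_nbhd E (frac t)"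
    and w_pos: "w \<ge> 1"
begin

lemma frac_orbit_point_in_Ob: "frac (orbit_point n) \<in> Ob"
  using orbit_point_in_L L_eq by auto

lemma orbit_point_add_w_bounds: "orbit_point n < orbit_point (n + w)" "orbit_point (n + w) < orbit_point n + 1"
  using orbit_point_less_iff[of n "n + w"] w_pos H_less[OF orbit_point_in_L] H_orbit_point by auto

lemma w_less_l: "w < int l"
  using orbit_point_add_w_bounds(2)[of 0] orbit_point_add_l[of 0] orbit_point_less_iff[of w "int l"]
  by simp

lemma orbit_edge_w: "(frac (orbit_point n), frac (orbit_point (n + w))) \<in> E"
proof -
  have "frac (orbit_point (n + w)) \<noteq> frac (orbit_point n)"
    using frac_inj_on_window[of "orbit_point n" "orbit_point (n + w)" "orbit_point n"]
      orbit_point_add_w_bounds[of n] by auto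
  then show ?thesis
    using H_step[OF orbit_point_in_L] H_orbit_point by (auto simp: out_nbhd_iff)
qed

lemma orbit_edge:
  assumes "1 \<le> s" "s \<le> w"
  shows "(frac (orbit_point n), frac (orbit_point (n + s))) \<in> E"
proof (cases "s = w")
  case False
  have "orbit_point n < orbit_point (n + s)" "orbit_point (n + s) < orbit_point (n + w)"
    using orbit_point_less_iff assms False by auto
  then have "cyc_strict (frac (orbit_point n)) (frac (orbit_point (n + s))) (frac (orbit_point (n + w)))"
    using cyc_strict_frac orbit_point_add_w_bounds(2) by blast
  then show ?thesis
    using cyclic_graph_edge_split[OF graph orbit_edge_w] frac_orbit_point_in_Ob Ob_subset by blast
qed (use orbit_edge_w in simp)

lemma two_w_less_l: "2 * w < int l"
proof (rule ccontr)
  assume "\<not> ?thesis"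
  then have "(frac (orbit_point w), frac (orbit_point (w + (int l - w)))) \<in> E"
    using w_less_l by (intro orbit_edge) auto
  moreover have "frac (orbit_point (w + (int l - w))) = frac (orbit_point 0)"
    using orbit_point_add_l[of 0] by (simp add: frac_1_eq)
  ultimately show False
    using orbit_edge_w[of 0] cyclic_graph_no_opposite[OF graph] by fastforce
qed

lemma frac_orbit_point_mod: "frac (orbit_point (int (m mod l))) = frac (orbit_point (int m))"
proof -
  have "int m = int (m mod l) + int (m div l) * int l"
    by (metis of_nat_add of_nat_mult mod_div_mult_eq add.commute)
  then have "orbit_point (int m) = orbit_point (int (m mod l)) + of_int (int (m div l))"
    using orbit_point_shift by simp
  then show ?thesis by (metis frac_add_of_int_right)
qed

lemma orbit_point_window: "0 \<le> n \<Longrightarrow> n < int l \<Longrightarrow> v \<le> orbit_point n \<and> orbit_point n < v + 1"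
  using orbit_point_le_iff[of 0 n] orbit_point_less_iff[of n "int l"] orbit_point_add_l[of 0] orbit_point_0
  by auto

lemma cyc_hom_orbit: "cyc_hom l (nat w) Ob (E \<inter> (Ob \<times> Ob)) (\<lambda>m. frac (orbit_point (int m)))"
  unfolding cyc_hom_def
proof (intro conjI allI impI)
  fix i s assume "i < l" and s: "1 \<le> s \<and> s \<le> nat w"
  have "(frac (orbit_point (int i)), frac (orbit_point (int i + int s))) \<in> E"
    using orbit_edge[of "int s" "int i"] s w_pos by auto
  then show "(frac (orbit_point (int i)), frac (orbit_point (int ((i + s) mod l)))) \<in> E \<inter> Ob \<times> Ob"
    using frac_orbit_point_mod[of "i + s"] frac_orbit_point_in_Ob by simp
next
  fix i j k assume ijk: "i < l" "j < l" "k < l"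
    and cw: "cyc_weak (real i / real l) (real j / real l) (real k / real l)"
  have l0: "real l > 0" using l_pos by simp
  have frac_id: "\<And>m. m < l \<Longrightarrow> frac (real m / real l) = real m / real l"
    using l0 by (simp add: frac_eq)
  have le_iff: "\<And>a b. real a / real l \<le> real b / real l \<longleftrightarrow> orbit_point (int a) \<le> orbit_point (int b)"
    using l0 orbit_point_le_iff by (simp add: divide_le_cancel)
  have "(real i / real l \<le> real j / real l \<and> real j / real l \<le> real k / real l) \<or>
      (real j / real l \<le> real k / real l \<and> real k / real l \<le> real i / real l) \<or>
      (real k / real l \<le> real i / real l \<and> real i / real l \<le> real j / real l)"
    using cyc_weak_frac_iff[of 0 "real i / real l" "real j / real l" "real k / real l"] ijk frac_id cw l0
    by simp
  then show "cyc_weak (frac (orbit_point (int i))) (frac (orbit_point (int j))) (frac (orbit_point (int k)))"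
    unfolding le_iff using cyc_weak_frac_iff[of v] orbit_point_window ijk by simp
next
  assume "1 \<le> nat w"
  have "1 < l" using two_w_less_l w_pos by simp
  moreover have "frac (orbit_point 0) \<noteq> frac (orbit_point 1)"
    using frac_inj_on_window[of "orbit_point 0" "orbit_point 0" "orbit_point 1"] orbit_point_less_iff[of 0 1]
      orbit_point_add_l[of 0] orbit_point_less_iff[of 1 "int l"] calculation by auto
  ultimately show "\<exists>i<l. \<exists>j<l. frac (orbit_point (int i)) \<noteq> frac (orbit_point (int j))"
    by (intro exI[of _ 0] exI[of _ 1]) auto
qed (use frac_orbit_point_in_Ob in simp)

end

section \<open>Walks from cyclic homomorphisms\<close>

locale cyc_hom_graph =
  fixes V :: "real set" and E :: "(real \<times> real) set" and n k :: nat and Wf :: "real set"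
    and f :: "nat \<Rightarrow> real"
  assumes graph: "cyclic_graph V E" and Wf_subset: "Wf \<subseteq> V"
    and hom: "cyc_hom n k Wf (E \<inter> (Wf \<times> Wf)) f" and k_pos: "k \<ge> 1" and two_k_less: "2 * k < n"
begin

definition hom_seq :: "nat \<Rightarrow> real" where
  "hom_seq j = f (j mod n)"

lemma n_pos: "n > 0"
  using two_k_less by simp

lemma hom_seq_eq: "i < n \<Longrightarrow> hom_seq i = f i"
  unfolding hom_seq_def by simp

lemma hom_seq_add_n: "hom_seq (j + n) = hom_seq j"
  unfolding hom_seq_def by simp

lemma hom_seq_in_V: "hom_seq j \<in> V"
  using hom Wf_subset n_pos unfolding hom_seq_def cyc_hom_def by auto

lemma hom_seq_unit: "hom_seq j \<in> {0..<1}"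
  using cyclic_graph_vertex_unit[OF graph hom_seq_in_V] .

lemma hom_seq_edge:
  assumes "1 \<le> s" "s \<le> k"
  shows "(hom_seq a, hom_seq (a + s)) \<in> E"
proof -
  have "(f (a mod n), f ((a mod n + s) mod n)) \<in> E"
    using hom n_pos assms unfolding cyc_hom_def by auto
  then show ?thesis unfolding hom_seq_def by (simp add: mod_add_left_eq)
qed

lemma hom_seq_step_ne: "hom_seq j \<noteq> hom_seq (Suc j)"
  using hom_seq_edge[of 1 j] k_pos cyclic_graph_no_loop[OF graph] by auto

lemma hom_cyc_weak:
  assumes "i \<le> j" "j \<le> l" "l < n"
  shows "cyc_weak (f i) (f j) (f l)"
proof -
  have frac_id: "m < n \<Longrightarrow> frac (real m / real n) = real m / real n" for m
    by (simp add: frac_eq)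
  have "cyc_weak (frac (real i / real n)) (frac (real j / real n)) (frac (real l / real n))"
    using assms n_pos by (subst cyc_weak_frac_iff[of 0]) (auto simp: divide_right_mono)
  then show ?thesis
    using hom assms frac_id unfolding cyc_hom_def by simp
qed

lemma f0_unit: "f 0 \<in> {0..<1}"
  using hom_seq_unit[of 0] hom_seq_eq[OF n_pos] by simp

lemma frac_hom_seq_walk_len: "frac (f 0 + walk_len i hom_seq) = hom_seq i"
  using hom_seq_unit hom_seq_eq[OF n_pos] f0_unit by (intro frac_add_walk_len) auto

lemma cdist_f0_eq_walk_len:
  assumes "i < n" "walk_len i hom_seq < 1"
  shows "cdist (f 0) (f i) = walk_len i hom_seq"
  using cdist_frac_frac_if_le[of "f 0" "f 0 + walk_len i hom_seq"] frac_hom_seq_walk_len[of i]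
    hom_seq_unit[of 0] hom_seq_eq[OF n_pos] hom_seq_eq[OF assms(1)] assms(2) walk_len_nonneg
  by simp

text \<open>Once the walk along f has gone around once, it is back at f 0: the cyclic order of
  0, m - 1, m leaves no room for f m anywhere else.\<close>

lemma hom_return:
  assumes m: "0 < m" "m < n" and turn: "walk_len m hom_seq \<ge> 1" "walk_len (m - 1) hom_seq < 1"
  shows "f m = f 0"
proof -
  obtain p where p: "m = Suc p" using m(1) by (cases m) auto
  have "cdist (f 0) (f p) + cdist (f p) (f m) + cdist (f m) (f 0) \<le> 1"
    using hom_cyc_weak[of 0 p m] m p unfolding cyc_weak_def by simp
  moreover have "walk_len m hom_seq = cdist (f 0) (f p) + cdist (f p) (f m)"
    using cdist_f0_eq_walk_len[of p] turn(2) m p hom_seq_eq by (simp add: walk_len_Suc)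
  ultimately have "cdist (f m) (f 0) = 0"
    using turn(1) cdist_nonneg[of "f m" "f 0"] by linarith
  then show ?thesis
    using cdist_eq_0_iff hom_seq_unit hom_seq_eq[OF m(2)] hom_seq_eq[OF n_pos] by metis
qed

text \<open>After a return to f 0 at time m, every later value lies in both arcs from f 0 to f 1,
  i.e. is f 0 or f 1; then the edge from f (n - 1) back to f 0 is impossible.\<close>

lemma hom_no_return:
  assumes m: "0 < m" "m < n"
  shows "f m \<noteq> f 0"
proof
  assume fm: "f m = f 0"
  have e01: "(f 0, f 1) \<in> E" and e_last: "(f (n - 1), f 0) \<in> E"
    using hom_seq_edge[of 1 0] hom_seq_edge[of 1 "n - 1"] k_pos m hom_seq_eq hom_seq_eq[OF n_pos]
      hom_seq_add_n[of 0]
    by auto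
  have "f 0 \<noteq> f 1" using e01 cyclic_graph_no_loop[OF graph] by auto
  have unit: "f i \<in> {0..<1}" if "i < n" for i using hom_seq_unit[of i] hom_seq_eq[OF that] by simp
  have tail: "f j = f 0 \<or> f j = f 1" if "m \<le> j" "j < n" for j
  proof (cases "m = 1")
    case True then show ?thesis using fm \<open>f 0 \<noteq> f 1\<close> by simp
  next
    case False
    then have "cyc_weak (f 0) (f 1) (f j)" "cyc_weak (f 1) (f 0) (f j)"
      using hom_cyc_weak[of 0 1 j] hom_cyc_weak[of 1 m j] that m fm by auto
    then show ?thesis
      using cyc_weak_both_orders[OF unit unit unit \<open>f 0 \<noteq> f 1\<close>] that m by auto
  qed
  then have "f (n - 1) = f 0 \<or> f (n - 1) = f 1" using m by simp
  then show False
    using e_last e01 cyclic_graph_no_loop[OF graph] cyclic_graph_no_opposite[OF graph] by auto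
qed

lemma walk_len_period_int: "walk_len n hom_seq \<in> \<int>"
proof -
  have "frac (f 0 + walk_len n hom_seq) = frac (f 0)"
    using frac_hom_seq_walk_len[of n] hom_seq_add_n[of 0] hom_seq_eq[OF n_pos] hom_seq_unit[of 0]
    by simp
  then have "frac (walk_len n hom_seq) = 0"
    using cdist_frac_frac[of "f 0" "f 0 + walk_len n hom_seq"] by (simp add: cdist_def)
  then show ?thesis by (simp add: frac_eq_0_iff)
qed

lemma walk_len_period_pos: "walk_len n hom_seq > 0"
proof -
  have "cdist (hom_seq 0) (hom_seq 1) > 0"
    using hom_seq_step_ne[of 0] cdist_eq_0_iff hom_seq_unit cdist_nonneg by (metis One_nat_def less_eq_real_def)
  then have "walk_len 1 hom_seq > 0" by (simp add: walk_len_def)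
  then show ?thesis using walk_len_mono[of 1 n hom_seq] n_pos by simp
qed

lemma walk_len_period_less_2: "walk_len n hom_seq < 2"
proof (rule ccontr)
  assume "\<not> walk_len n hom_seq < 2"
  then have ge: "walk_len n hom_seq \<ge> 1" by simp
  define m where "m = (LEAST i. walk_len i hom_seq \<ge> 1)"
  have turn: "walk_len m hom_seq \<ge> 1" unfolding m_def by (rule LeastI[of _ n]) (rule ge)
  have "m \<le> n" unfolding m_def by (rule Least_le) (rule ge)
  have before: "walk_len i hom_seq < 1" if "i < m" for i
    using not_less_Least[OF that[unfolded m_def]] by simp
  obtain p where p: "m = Suc p" using turn by (cases m) auto
  then have "walk_len m hom_seq < 2"
    using before[of p] walk_len_Suc[of p hom_seq] cdist_less_1[of "hom_seq p" "hom_seq m"] by simp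
  then have "m < n" using \<open>m \<le> n\<close> \<open>\<not> walk_len n hom_seq < 2\<close> by (cases "m = n") auto
  moreover have "walk_len (m - 1) hom_seq < 1" using before p by simp
  ultimately show False
    using hom_return[of m] hom_no_return[of m] turn p by simp
qed

lemma walk_len_period: "walk_len n hom_seq = 1"
proof -
  obtain z where z: "walk_len n hom_seq = of_int z" using walk_len_period_int by (auto elim: Ints_cases)
  then have "0 < z" "z < 2" using walk_len_period_pos walk_len_period_less_2 by auto
  then show ?thesis using z by simp
qed

lemma walk_len_add_period: "walk_len (n + i) hom_seq = walk_len i hom_seq + 1"
  using walk_len_add[of n i hom_seq] walk_len_period hom_seq_add_n by simp

lemma walk_len_mult_period: "walk_len (r * n) hom_seq = real r"
  by (induction r) (simp_all add: walk_len_add_period add.commute)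

text \<open>A window of k consecutive steps has total length at most 1 (as 2k < n) and not exactly 1
  (its endpoints are adjacent), so it is read off from its endpoints.\<close>

lemma cdist_window: "cdist (hom_seq a) (hom_seq (a + k)) = walk_len (a + k) hom_seq - walk_len a hom_seq"
proof -
  define D where "D = walk_len (a + k) hom_seq - walk_len a hom_seq"
  have "D \<ge> 0" unfolding D_def using walk_len_mono[of a "a + k"] by simp
  moreover have "D \<le> 1"
    unfolding D_def using walk_len_mono[of "a + k" "n + a" hom_seq] walk_len_add_period[of a] two_k_less
    by simp
  moreover have cd: "cdist (hom_seq a) (hom_seq (a + k)) = frac D"
    using cdist_frac_frac frac_hom_seq_walk_len unfolding D_def by (metis add_diff_cancel_left)
  moreover have "D \<noteq> 1"
  proof
    assume "D = 1"
    then have "hom_seq a = hom_seq (a + k)" using cd cdist_eq_0_iff hom_seq_unit by simp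
    then show False using hom_seq_edge[of k a] k_pos cyclic_graph_no_loop[OF graph] by simp
  qed
  ultimately show ?thesis unfolding D_def by (simp add: frac_eq)
qed

text \<open>Jumping k steps at a time along f gives a walk that goes around k times per n steps.\<close>

lemma long_walk: "\<exists>z. z 0 = f 0 \<and> is_walk E (n * r) z \<and> walk_len (n * r) z = real (r * k)"
proof -
  define z where "z t = hom_seq (t * k)" for t
  have "z (Suc t) = hom_seq (t * k + k)" for t by (simp add: z_def add.commute)
  then have "is_walk E m z" for m
    unfolding is_walk_def using hom_seq_edge[of k] k_pos by (simp add: out_nbhd_iff z_def)
  moreover have "walk_len m z = walk_len (m * k) hom_seq" for m
  proof (induction m)
    case (Suc m)
    then show ?case
      using cdist_window[of "m * k"] by (simp add: walk_len_Suc z_def add.commute)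
  qed simp
  moreover have "z 0 = f 0" using hom_seq_eq[OF n_pos] by (simp add: z_def)
  ultimately show ?thesis
    using walk_len_mult_period[of "r * k"] by (intro exI[of _ z]) (simp add: algebra_simps)
qed

end

section \<open>The greedy lift\<close>

definition greedy_lift :: "(real \<times> real) set \<Rightarrow> real set \<Rightarrow> real \<Rightarrow> real" where
  "greedy_lift E Ob t = t + Max (cdist (frac t) ` (out_nbhd E (frac t) \<inter> Ob))"

locale greedy =
  fixes V :: "real set" and E :: "(real \<times> real) set" and Ob :: "real set"
  assumes graph: "cyclic_graph V E" and Ob_subset: "Ob \<subseteq> V" and Ob_finite: "finite Ob"
begin

abbreviation "H \<equiv> greedy_lift E Ob"

lemma greedy_step_le:
  "frac t \<in> Ob \<Longrightarrow> w \<in> out_nbhd E (frac t) \<inter> Ob \<Longrightarrow> t + cdist (frac t) w \<le> H t"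
  unfolding greedy_lift_def using Ob_finite by (simp add: Max_ge)

lemma greedy_step_attained:
  assumes "frac t \<in> Ob"
  obtains w where "w \<in> out_nbhd E (frac t) \<inter> Ob" "H t = t + cdist (frac t) w"
proof -
  have "out_nbhd E (frac t) \<inter> Ob \<noteq> {}" using assms by (auto simp: out_nbhd_iff)
  then have "Max (cdist (frac t) ` (out_nbhd E (frac t) \<inter> Ob)) \<in> cdist (frac t) ` (out_nbhd E (frac t) \<inter> Ob)"
    using Ob_finite by (intro Max_in) auto
  then show ?thesis using that unfolding greedy_lift_def by auto
qed

lemma greedy_ge: "frac t \<in> Ob \<Longrightarrow> t \<le> H t"
  and greedy_less: "frac t \<in> Ob \<Longrightarrow> H t < t + 1"
  by (metis greedy_step_attained cdist_nonneg add_le_cancel_left add.right_neutral)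
    (metis greedy_step_attained cdist_less_1 add_less_cancel_left)

lemma frac_greedy: "frac t \<in> Ob \<Longrightarrow> frac (H t) \<in> out_nbhd E (frac t) \<inter> Ob"
proof -
  assume t: "frac t \<in> Ob"
  obtain w where w: "w \<in> out_nbhd E (frac t) \<inter> Ob" "H t = t + cdist (frac t) w"
    using greedy_step_attained[OF t] by blast
  have "w \<in> {0..<1}" using w(1) Ob_subset cyclic_graph_vertex_unit[OF graph] by blast
  moreover have "frac (H t) = frac (t + (w - frac t))"
    unfolding w(2) cdist_def by (rule frac_add_frac)
  moreover have "t + (w - frac t) = w + of_int \<lfloor>t\<rfloor>" by (simp add: frac_def)
  ultimately show ?thesis using w(1) by (simp only: frac_add_of_int_right) simp
qed

lemma greedy_shift: "H (t + of_int z) = H t + of_int z"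
  unfolding greedy_lift_def by simp

lemma greedy_mono:
  assumes s: "frac s \<in> Ob" and t: "frac t \<in> Ob" and st: "s \<le> t"
  shows "H s \<le> H t"
proof (cases "H s \<le> t \<or> s = t")
  case True
  then show ?thesis using greedy_ge[OF t] by auto
next
  case False
  then have lt: "s < t" "t < H s" "H s < s + 1" using st greedy_less[OF s] by auto
  then have cs: "cyc_strict (frac s) (frac t) (frac (H s))" by (rule cyc_strict_frac)
  then have "(frac s, frac (H s)) \<in> E"
    using frac_greedy[OF s] unfolding cyc_strict_def by (auto simp: out_nbhd_iff)
  then have "(frac t, frac (H s)) \<in> E"
    using cyclic_graph_edge_split[OF graph _ _ cs] t Ob_subset by blast
  then have "t + cdist (frac t) (frac (H s)) \<le> H t"
    using greedy_step_le[OF t] frac_greedy[OF s] by (simp add: out_nbhd_iff)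
  then show ?thesis using cdist_frac_frac_if_le[of t "H s"] lt by simp
qed

sublocale circle_lift H "{t. frac t \<in> Ob}"
  using frac_greedy greedy_shift greedy_mono by unfold_locales auto

lemma greedy_walk:
  assumes t: "frac t \<in> Ob"
  shows "\<exists>y. y 0 = frac t \<and> is_walk E m y \<and> walk_len m y = (H ^^ m) t - t"
proof -
  define y where "y i = frac ((H ^^ i) t)" for i
  have in_Ob: "frac ((H ^^ i) t) \<in> Ob" for i using funpow_closed t by simp
  have "is_walk E m y" unfolding is_walk_def y_def using frac_greedy[OF in_Ob] by simp
  moreover have "walk_len m y = (H ^^ m) t - t"
  proof (induction m)
    case (Suc m)
    have "cdist (y m) (y (Suc m)) = H ((H ^^ m) t) - (H ^^ m) t"
      unfolding y_def using cdist_frac_frac_if_le greedy_ge[OF in_Ob] greedy_less[OF in_Ob] by simp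
    then show ?case using Suc by (simp add: walk_len_Suc)
  qed simp
  ultimately show ?thesis by (intro exI[of _ y]) (simp add: y_def)
qed

lemma greedy_dominates:
  assumes x: "is_walk E m x" "\<And>i. i \<le> m \<Longrightarrow> x i \<in> Ob" and t: "frac t = x 0"
  shows "t + walk_len m x \<le> (H ^^ m) t"
  using x
proof (induction m)
  case (Suc m)
  define s where "s = t + walk_len m x"
  have unit: "x i \<in> {0..<1}" if "i \<le> Suc m" for i
    using Suc.prems(2)[OF that] Ob_subset cyclic_graph_vertex_unit[OF graph] by blast
  have fs: "frac s = x m" unfolding s_def using unit t by (intro frac_add_walk_len) auto
  have "x (Suc m) \<in> out_nbhd E (x m) \<inter> Ob" using Suc.prems by (simp add: is_walk_Suc)
  then have "s + cdist (x m) (x (Suc m)) \<le> H s"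
    using greedy_step_le[of s] fs Suc.prems(2) by simp
  also have "H s \<le> H ((H ^^ m) t)"
    using mono[of s "(H ^^ m) t"] funpow_closed[of t m] Suc fs t unfolding s_def
    by (simp add: is_walk_Suc)
  finally show ?case unfolding s_def by (simp add: walk_len_Suc add.assoc)
qed simp

end

section \<open>Bounds on the winding fraction\<close>

lemma cyc_hom_const: "w \<in> W \<Longrightarrow> cyc_hom 1 0 W F (\<lambda>_. w)"
  unfolding cyc_hom_def by (auto simp: cyc_weak_def cdist_def)

lemma wf_fin_ge:
  assumes "cyc_hom n k W F f" "2 * k < n"
  shows "real k / real n \<le> wf_fin W F"
  unfolding wf_fin_def
proof (rule cSup_upper)
  show "bdd_above {real k / real n |n k. 2 * k < n \<and> (\<exists>f. cyc_hom n k W F f)}"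
    by (rule bdd_aboveI[of _ "1 / 2"]) (auto simp: divide_le_eq)
qed (use assms in blast)

lemma wf_fin_le:
  assumes "W \<noteq> {}" "\<And>n k f. cyc_hom n k W F f \<Longrightarrow> 2 * k < n \<Longrightarrow> real k / real n \<le> b"
  shows "wf_fin W F \<le> b"
  unfolding wf_fin_def
proof (rule cSup_least)
  obtain w where "w \<in> W" using assms(1) by blast
  then show "{real k / real n |n k. 2 * k < n \<and> (\<exists>f. cyc_hom n k W F f)} \<noteq> {}"
    using cyc_hom_const[of w W F] by fastforce
qed (use assms(2) in blast)

lemma wf_fin_le_half: "W \<noteq> {} \<Longrightarrow> wf_fin W F \<le> 1 / 2"
  by (rule wf_fin_le) (auto simp: divide_le_eq)

lemma winding_fraction_ge:
  assumes "finite W" "W \<subseteq> V" "W \<noteq> {}" "cyc_hom n k W (E \<inter> (W \<times> W)) f" "2 * k < n"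
  shows "real k / real n \<le> winding_fraction V E"
proof -
  have "real k / real n \<le> wf_fin W (E \<inter> (W \<times> W))" by (rule wf_fin_ge[OF assms(4,5)])
  also have "\<dots> \<le> winding_fraction V E"
    unfolding winding_fraction_def
  proof (rule cSup_upper)
    show "bdd_above {wf_fin W (E \<inter> (W \<times> W)) |W. finite W \<and> W \<subseteq> V \<and> W \<noteq> {}}"
      using wf_fin_le_half by (intro bdd_aboveI[of _ "1 / 2"]) blast
  qed (use assms in blast)
  finally show ?thesis .
qed

lemma winding_fraction_le:
  assumes "v \<in> V"
    and "\<And>W n k f. finite W \<Longrightarrow> W \<subseteq> V \<Longrightarrow> W \<noteq> {} \<Longrightarrow> cyc_hom n k W (E \<inter> (W \<times> W)) f
       \<Longrightarrow> 2 * k < n \<Longrightarrow> real k / real n \<le> b"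
  shows "winding_fraction V E \<le> b"
  unfolding winding_fraction_def
proof (rule cSup_least)
  show "{wf_fin W (E \<inter> W \<times> W) |W. finite W \<and> W \<subseteq> V \<and> W \<noteq> {}} \<noteq> {}"
    using assms(1) by (auto intro!: exI[of _ "{v}"])
qed (use assms(2) in \<open>auto intro!: wf_fin_le\<close>)

section \<open>Minimal periodic orbits\<close>

locale minimal_periodic =
  fixes V :: "real set" and E :: "(real \<times> real) set" and v :: real and l :: nat and w :: int
  assumes graph: "cyclic_graph V E" and v_in_V: "v \<in> V" and periodic: "periodic_at E v l"
    and minimal: "\<And>i. periodic_at E v i \<Longrightarrow> l \<le> i" and gamma_eq: "gamma E l v = of_int w"
begin

definition orbit_walk :: "nat \<Rightarrow> real" where
  "orbit_walk = (SOME x. x 0 = v \<and> is_walk E l x \<and> walk_len l x = gamma E l v)"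

lemma orbit_walk: "orbit_walk 0 = v" "is_walk E l orbit_walk" "walk_len l orbit_walk = of_int w"
proof -
  have "\<exists>x. x 0 = v \<and> is_walk E l x \<and> walk_len l x = gamma E l v"
    using periodic unfolding periodic_at_def gamma_attained_def by blast
  from someI_ex[OF this] show "orbit_walk 0 = v" "is_walk E l orbit_walk" "walk_len l orbit_walk = of_int w"
    unfolding orbit_walk_def gamma_eq by auto
qed

lemma l_pos: "l \<ge> 1"
  using periodic unfolding periodic_at_def by simp

lemma w_nonneg: "w \<ge> 0"
  using orbit_walk(3) walk_len_nonneg[of l orbit_walk] by simp

lemma frac_v: "frac v = v"
  using cyclic_graph_vertex_unit[OF graph v_in_V] by simp

lemma walk_len_le_w: "y 0 = v \<Longrightarrow> is_walk E l y \<Longrightarrow> walk_len l y \<le> of_int w"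
  using walk_len_le_gamma gamma_eq by metis

lemma walk_len_le_mult: "y 0 = v \<Longrightarrow> is_walk E (m * l) y \<Longrightarrow> walk_len (m * l) y \<le> of_int (int m * w)"
  using walk_len_mult_le[OF graph v_in_V walk_len_le_w] by blast

definition orbit_set :: "real set" where
  "orbit_set = orbit_walk ` {..l}"

lemma v_in_orbit_set: "v \<in> orbit_set"
  unfolding orbit_set_def using orbit_walk(1) by force

sublocale G: greedy V E orbit_set
  unfolding orbit_set_def
  using graph walk_in_V[OF graph orbit_walk(2)] orbit_walk(1) v_in_V by unfold_locales auto

lemma greedy_walk_from_v: "\<exists>y. y 0 = v \<and> is_walk E m y \<and> walk_len m y = (G.H ^^ m) v - v"
  using G.greedy_walk[of v m] v_in_orbit_set frac_v by simp

lemma greedy_periodic: "(G.H ^^ l) v = v + of_int w"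
proof -
  obtain y where "y 0 = v" "is_walk E l y" "walk_len l y = (G.H ^^ l) v - v"
    using greedy_walk_from_v by blast
  then have "(G.H ^^ l) v \<le> v + of_int w" using walk_len_le_w by fastforce
  moreover have "v + walk_len l orbit_walk \<le> (G.H ^^ l) v"
    using G.greedy_dominates[OF orbit_walk(2)] orbit_walk(1) frac_v unfolding orbit_set_def by auto
  ultimately show ?thesis using orbit_walk(3) by simp
qed

text \<open>If w / l = w' / l' then H^l' v = v + w' by the rotation number, so the greedy walk
  attains w' in l' steps; an l'-walk longer than w' would, repeated g times, beat gamma_l.\<close>

lemma periodic_at_divisor:
  fixes g l' :: nat and w' :: int
  assumes l: "l = g * l'" and w: "w = int g * w'" and l': "l' \<ge> 1"
  shows "periodic_at E v l'"
proof -
  have v_in_L: "v \<in> {t. frac t \<in> orbit_set}" using v_in_orbit_set frac_v by simp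
  have "(G.H ^^ l') v = v + of_int w'"
    using G.rotation_le_iff[OF v_in_L l_pos greedy_periodic, where k = l' and c = w']
      G.rotation_ge_iff[OF v_in_L l_pos greedy_periodic, where k = l' and c = w'] l w
    by (simp add: algebra_simps)
  then obtain y where y: "y 0 = v" "is_walk E l' y" "walk_len l' y = of_int w'"
    using greedy_walk_from_v[of l'] by auto
  have "gamma E l' v \<le> of_int w'"
  proof (rule gamma_le, rule ccontr)
    fix z assume z: "z 0 = v" "is_walk E l' z" "\<not> walk_len l' z \<le> of_int w'"
    have "g \<ge> 1" using l l_pos by (cases g) auto
    with z obtain u where "u 0 = v" "is_walk E (g * l') u" "walk_len (g * l') u > of_int (int g * w')"
      using walk_amplify[OF graph v_in_V z(1,2), of w' g] by auto
    then show False using walk_len_le_w l w by fastforce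
  qed
  moreover have "walk_len l' y \<le> gamma E l' v" using walk_len_le_gamma y by blast
  ultimately have "gamma E l' v = of_int w'" using y(3) by simp
  then show ?thesis
    unfolding periodic_at_def gamma_attained_def using l' y by (simp add: exI[of _ y])
qed

lemma coprime_w_l: "coprime w (int l)"
proof -
  define g where "g = nat (gcd w (int l))"
  have "gcd w (int l) > 0" using l_pos by simp
  then have g_pos: "g \<ge> 1" unfolding g_def by linarith
  have "int g = gcd w (int l)" unfolding g_def by simp
  then have "g dvd l" "int g dvd w" by (metis gcd_dvd2 int_dvd_int_iff, metis gcd_dvd1)
  then obtain l' w' where l: "l = g * l'" and w: "w = int g * w'" by (auto elim!: dvdE)
  have "l' \<ge> 1" using l l_pos by (cases l') auto
  then have "l \<le> l'" using minimal periodic_at_divisor[OF l w] by blast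
  then have "g * l' \<le> 1 * l'" using l by simp
  then have "g = 1" using g_pos \<open>l' \<ge> 1\<close> mult_le_cancel2[of g l' 1] by simp
  then show ?thesis unfolding g_def by (simp add: coprime_iff_gcd_eq_1)
qed

lemma winding_fraction_ge_ratio: "of_int w / real l \<le> winding_fraction V E"
proof (cases "w = 0")
  case True
  then show ?thesis
    using winding_fraction_ge[where W = "{v}" and n = 1 and k = 0, OF _ _ _ cyc_hom_const] v_in_V by simp
next
  case False
  interpret orbit_in_graph G.H "{t. frac t \<in> orbit_set}" v l w V E orbit_set
    using v_in_orbit_set frac_v l_pos greedy_periodic coprime_w_l G.Ob_subset graph w_nonneg False
      G.greedy_ge G.greedy_less G.frac_greedy
    by unfold_locales auto
  have "real (nat w) / real l \<le> winding_fraction V E"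
    using winding_fraction_ge[OF G.Ob_finite G.Ob_subset _ cyc_hom_orbit] two_w_less_l w_pos
      v_in_orbit_set by fastforce
  then show ?thesis using w_nonneg by simp
qed

text \<open>Conversely, a homomorphism from C_n^k yields an (n l)-walk of length l k; shadowing it
  from v and comparing with the bound n w gives l k < n w + 1.\<close>

lemma winding_fraction_le_ratio: "winding_fraction V E \<le> of_int w / real l"
proof (rule winding_fraction_le[OF v_in_V])
  fix W n k f
  assume W: "finite W" "W \<subseteq> V" "W \<noteq> {}" and hom: "cyc_hom n k W (E \<inter> (W \<times> W)) f"
    and nk: "2 * k < n"
  show "real k / real n \<le> of_int w / real l"
  proof (cases "k = 0")
    case False
    interpret cyc_hom_graph V E n k W f
      using graph W(2) hom False nk by unfold_locales auto
    obtain z where z: "z 0 = f 0" "is_walk E (n * l) z" "walk_len (n * l) z = real (l * k)"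
      using long_walk by blast
    define s where "s = (if f 0 \<le> v then f 0 else f 0 - 1)"
    have fs: "frac s = z 0"
      unfolding s_def using z(1) f0_unit frac_1_eq[of "f 0 - 1"] by auto
    have s: "s \<le> v" "v - 1 < s"
      unfolding s_def using f0_unit cyclic_graph_vertex_unit[OF graph v_in_V] by auto
    obtain u where u: "u 0 = v" "is_walk E (n * l) u" "s + walk_len (n * l) z \<le> v + walk_len (n * l) u"
      using walk_domination[OF graph z(2) _ fs _ s(1)] z(1) hom_seq_in_V[of 0] hom_seq_eq[OF n_pos]
        frac_v v_in_V by auto
    have "walk_len (n * l) u \<le> of_int (int n * w)"
      using walk_len_le_mult[of u n] u(1,2) by simp
    then have "real_of_int (int (l * k)) < real_of_int (int n * w + 1)" using u(3) z(3) s(2) by simp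
    then have "int l * int k \<le> int n * w" by (simp only: of_int_less_iff) simp
    then have "real l * real k \<le> real n * of_int w" by (metis of_int_le_iff of_int_mult of_int_of_nat_eq)
    then show ?thesis using n_pos l_pos by (simp add: divide_le_eq le_divide_eq mult.commute)
  qed (use w_nonneg in simp)
qed

lemma winding_fraction_eq: "winding_fraction V E = of_int w / real l"
  using winding_fraction_ge_ratio winding_fraction_le_ratio by simp

end

lemma coprime_fraction_unique:
  fixes p q w l :: int
  assumes "q > 0" "l > 0" "coprime p q" "coprime w l"
    and "real_of_int p / real_of_int q = real_of_int w / real_of_int l"
  shows "p = w \<and> q = l"
proof -
  have "real_of_int (p * l) = real_of_int (w * q)" using assms(1,2,5) by (simp add: field_simps)
  then have cross: "p * l = w * q" by (simp only: of_int_eq_iff)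
  then have "q dvd l" "l dvd q"
    using assms(3,4) by (metis coprime_commute coprime_dvd_mult_right_iff dvd_triv_right)+
  then have "q = l" using assms(1,2) by (simp add: zdvd_antisym_nonneg)
  then show ?thesis using cross assms(2) by simp
qed

theorem mainTheorem9:
  fixes V :: "real set" and E :: "(real \<times> real) set" and p q :: int and v :: real
  assumes "cyclic_graph V E"
    and "winding_fraction V E = real_of_int p / real_of_int q"
    and "q > 0" and "coprime p q"
    and "v \<in> V" and "periodic E v"
  shows "orbit_length E v = nat q \<and> winding_number E v = real_of_int p
         \<and> gamma E (nat q) v = real_of_int p"
proof -
  define l where "l = orbit_length E v"
  have periodic: "periodic_at E v l"
    using assms(6) unfolding l_def orbit_length_def periodic_def by (rule LeastI_ex)
  then obtain w where w: "gamma E l v = of_int w"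
    unfolding periodic_at_def by (auto elim: Ints_cases)
  interpret minimal_periodic V E v l w
    using assms(1,5) periodic w unfolding l_def orbit_length_def by unfold_locales (auto intro: Least_le)
  have "p = w \<and> q = int l"
    using coprime_fraction_unique[OF assms(3) _ assms(4) coprime_w_l] l_pos winding_fraction_eq assms(2)
    by simp
  then show ?thesis unfolding winding_number_def l_def[symmetric] using w by simp
qed

end
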